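(* Let $G$ be an $n$-player stage game (mixed strategies allowed). If there exist a positive integer $T$ and an SPE of $G(T)$ in which locally suboptimal behavior occurs, then there exists a strategy profile $\hat\sigma=(\hat\sigma_1,\dots,\hat\sigma_n)\in\prod_i\Delta A_i$ with $I(G)\subseteq B(\hat\sigma)$ and $B(\hat\sigma)\ne[n]$.
   Context: An $n$-player stage game $G$ has finite nonempty action sets $A_1,\dots,A_n$ and payoffs $u_i:A_1\times\dots\times A_n\to\mathbb{R}$, extended to mixed profiles by expectation. $\mathrm{Nash}(G)$ is the set of mixed Nash equilibria of $G$, $V_i=\{u_i(\sigma):\sigma\in\mathrm{Nash}(G)\}$, $[n]=\{1,\dots,n\}$, $I(G)=\{i:|V_i|=1\}$, and for a profile $\sigma$, $B(\sigma)=\{i:\sigma_i$ is a best response to $\sigma_{-i}\}$. $G(T)$ is the $T$-round repetition of $G$ with realized action profiles observed after each round and payoff equal to the expected sum of stage payoffs; a strategy of player $i$ is a map $\mu_i$ from histories $\bigcup_{k=0}^{T-1}(A_1\times\dots\times A_n)^k$ to $\Delta A_i$. A profile $\mu$ is an SPE if for every $0\le k<T$ and history $h$ of length $k$, the continuation $\mu_{|h}$ is a Nash equilibrium of $G(T-k)$. Locally suboptimal behavior occurs in an SPE $\mu$ if for some history $h$ of length $k<T$, $(\mu_1(h),\dots,\mu_n(h))\notin\mathrm{Nash}(G)$. *)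

theory Defs
  imports Complex_Main "HOL-Library.FuncSet"
begin

text \<open>Players form a finite type 'i (so [n] = UNIV); A i is the action set of player i;
  pure action profiles are functions 'i => 'a; u i a is the stage payoff of player i.\<close>

definition mixed :: "'a set \<Rightarrow> ('a \<Rightarrow> real) \<Rightarrow> bool" where
  "mixed S p \<longleftrightarrow> (\<forall>x. 0 \<le> p x) \<and> (\<forall>x. x \<notin> S \<longrightarrow> p x = 0) \<and> sum p S = 1"

definition mixed_profile :: "('i \<Rightarrow> 'a set) \<Rightarrow> ('i \<Rightarrow> 'a \<Rightarrow> real) \<Rightarrow> bool" where
  "mixed_profile A \<sigma> \<longleftrightarrow> (\<forall>i. mixed (A i) (\<sigma> i))"

definition prof_prob :: "('i::finite \<Rightarrow> 'a \<Rightarrow> real) \<Rightarrow> ('i \<Rightarrow> 'a) \<Rightarrow> real" where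
  "prof_prob \<sigma> a = (\<Prod>j\<in>UNIV. \<sigma> j (a j))"

definition EU :: "('i::finite \<Rightarrow> 'a set) \<Rightarrow> ('i \<Rightarrow> ('i \<Rightarrow> 'a) \<Rightarrow> real) \<Rightarrow> 'i
                  \<Rightarrow> ('i \<Rightarrow> 'a \<Rightarrow> real) \<Rightarrow> real" where
  "EU A u i \<sigma> = (\<Sum>a\<in>PiE UNIV A. prof_prob \<sigma> a * u i a)"

definition best_response :: "('i::finite \<Rightarrow> 'a set) \<Rightarrow> ('i \<Rightarrow> ('i \<Rightarrow> 'a) \<Rightarrow> real)
                              \<Rightarrow> ('i \<Rightarrow> 'a \<Rightarrow> real) \<Rightarrow> 'i \<Rightarrow> bool" where
  "best_response A u \<sigma> i \<longleftrightarrow> (\<forall>\<tau>. mixed (A i) \<tau> \<longrightarrow> EU A u i (\<sigma>(i := \<tau>)) \<le> EU A u i \<sigma>)"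

definition Bset :: "('i::finite \<Rightarrow> 'a set) \<Rightarrow> ('i \<Rightarrow> ('i \<Rightarrow> 'a) \<Rightarrow> real)
                      \<Rightarrow> ('i \<Rightarrow> 'a \<Rightarrow> real) \<Rightarrow> 'i set" where
  "Bset A u \<sigma> = {i. best_response A u \<sigma> i}"

definition Nash :: "('i::finite \<Rightarrow> 'a set) \<Rightarrow> ('i \<Rightarrow> ('i \<Rightarrow> 'a) \<Rightarrow> real)
                      \<Rightarrow> ('i \<Rightarrow> 'a \<Rightarrow> real) set" where
  "Nash A u = {\<sigma>. mixed_profile A \<sigma> \<and> (\<forall>i. best_response A u \<sigma> i)}"

definition Vset :: "('i::finite \<Rightarrow> 'a set) \<Rightarrow> ('i \<Rightarrow> ('i \<Rightarrow> 'a) \<Rightarrow> real) \<Rightarrow> 'i \<Rightarrow> real set" where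
  "Vset A u i = (\<lambda>\<sigma>. EU A u i \<sigma>) ` Nash A u"

definition Iset :: "('i::finite \<Rightarrow> 'a set) \<Rightarrow> ('i \<Rightarrow> ('i \<Rightarrow> 'a) \<Rightarrow> real) \<Rightarrow> 'i set" where
  "Iset A u = {i. card (Vset A u i) = 1}"

text \<open>Repeated game. A history is a list of realized pure action profiles;
  a strategy of player i maps histories to mixed actions; a strategy profile is
  mu :: 'i => history => 'a => real.\<close>

type_synonym ('i, 'a) history = "('i \<Rightarrow> 'a) list"

definition is_history :: "('i \<Rightarrow> 'a set) \<Rightarrow> ('i, 'a) history \<Rightarrow> bool" where
  "is_history A h \<longleftrightarrow> (\<forall>a\<in>set h. a \<in> PiE UNIV A)"

definition rep_strategy :: "('i \<Rightarrow> 'a set) \<Rightarrow> 'i \<Rightarrow> (('i, 'a) history \<Rightarrow> 'a \<Rightarrow> real) \<Rightarrow> bool" where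
  "rep_strategy A i s \<longleftrightarrow> (\<forall>h. mixed (A i) (s h))"

definition rep_profile :: "('i \<Rightarrow> 'a set) \<Rightarrow> ('i \<Rightarrow> ('i, 'a) history \<Rightarrow> 'a \<Rightarrow> real) \<Rightarrow> bool" where
  "rep_profile A \<mu> \<longleftrightarrow> (\<forall>i. rep_strategy A i (\<mu> i))"

fun rep_val :: "('i::finite \<Rightarrow> 'a set) \<Rightarrow> ('i \<Rightarrow> ('i \<Rightarrow> 'a) \<Rightarrow> real) \<Rightarrow> nat
                 \<Rightarrow> ('i \<Rightarrow> ('i, 'a) history \<Rightarrow> 'a \<Rightarrow> real) \<Rightarrow> ('i, 'a) history \<Rightarrow> 'i \<Rightarrow> real" where
  "rep_val A u 0 \<mu> h i = 0"
| "rep_val A u (Suc T) \<mu> h i =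
     (\<Sum>a\<in>PiE UNIV A. prof_prob (\<lambda>j. \<mu> j h) a * (u i a + rep_val A u T \<mu> (h @ [a]) i))"

definition rep_payoff :: "('i::finite \<Rightarrow> 'a set) \<Rightarrow> ('i \<Rightarrow> ('i \<Rightarrow> 'a) \<Rightarrow> real) \<Rightarrow> nat
                 \<Rightarrow> ('i \<Rightarrow> ('i, 'a) history \<Rightarrow> 'a \<Rightarrow> real) \<Rightarrow> 'i \<Rightarrow> real" where
  "rep_payoff A u T \<mu> i = rep_val A u T \<mu> [] i"

definition rep_Nash :: "('i::finite \<Rightarrow> 'a set) \<Rightarrow> ('i \<Rightarrow> ('i \<Rightarrow> 'a) \<Rightarrow> real) \<Rightarrow> nat
                 \<Rightarrow> ('i \<Rightarrow> ('i, 'a) history \<Rightarrow> 'a \<Rightarrow> real) \<Rightarrow> bool" where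
  "rep_Nash A u T \<mu> \<longleftrightarrow> rep_profile A \<mu> \<and>
     (\<forall>i s. rep_strategy A i s \<longrightarrow> rep_payoff A u T (\<mu>(i := s)) i \<le> rep_payoff A u T \<mu> i)"

definition continuation :: "('i \<Rightarrow> ('i, 'a) history \<Rightarrow> 'a \<Rightarrow> real) \<Rightarrow> ('i, 'a) history
                              \<Rightarrow> ('i \<Rightarrow> ('i, 'a) history \<Rightarrow> 'a \<Rightarrow> real)" where
  "continuation \<mu> h = (\<lambda>i h'. \<mu> i (h @ h'))"

definition SPE :: "('i::finite \<Rightarrow> 'a set) \<Rightarrow> ('i \<Rightarrow> ('i \<Rightarrow> 'a) \<Rightarrow> real) \<Rightarrow> nat
                 \<Rightarrow> ('i \<Rightarrow> ('i, 'a) history \<Rightarrow> 'a \<Rightarrow> real) \<Rightarrow> bool" where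
  "SPE A u T \<mu> \<longleftrightarrow> (\<forall>k h. k < T \<longrightarrow> length h = k \<longrightarrow> is_history A h \<longrightarrow>
                        rep_Nash A u (T - k) (continuation \<mu> h))"

definition locally_suboptimal :: "('i::finite \<Rightarrow> 'a set) \<Rightarrow> ('i \<Rightarrow> ('i \<Rightarrow> 'a) \<Rightarrow> real) \<Rightarrow> nat
                 \<Rightarrow> ('i \<Rightarrow> ('i, 'a) history \<Rightarrow> 'a \<Rightarrow> real) \<Rightarrow> bool" where
  "locally_suboptimal A u T \<mu> \<longleftrightarrow>
     (\<exists>h. length h < T \<and> is_history A h \<and> (\<lambda>i. \<mu> i h) \<notin> Nash A u)"

end

theory Submission
  imports Defs
begin

text \<open>Take an off-equilibrium history h of maximal length below T. After every one-round
  extension of h the SPE prescribes stage Nash equilibria in all remaining rounds, so a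
  player i whose Nash payoff v is unique collects exactly (remaining rounds) \<times> v from round
  two on, whatever happens in the first round. Her continuation value is therefore
  unaffected by a deviation at h, so the SPE condition at h makes her stage action at h a
  best response: i \<in> B(\<sigma>) for \<sigma> = \<mu>(h). Since \<sigma> is not a Nash equilibrium, B(\<sigma>) \<noteq> [n].\<close>

lemma prof_prob_sum_eq_1:
  fixes A :: "'i::finite \<Rightarrow> 'a set"
  assumes fin: "\<And>i. finite (A i)" and mp: "mixed_profile A \<sigma>"
  shows "(\<Sum>a\<in>PiE UNIV A. prof_prob \<sigma> a) = 1"
proof -
  have "(\<Sum>a\<in>PiE UNIV A. prof_prob \<sigma> a) = (\<Prod>j\<in>UNIV. \<Sum>x\<in>A j. \<sigma> j x)"
    unfolding prof_prob_def by (rule prod_sum_PiE[symmetric]) (auto simp: fin)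
  also have "\<dots> = 1" using mp by (simp add: mixed_profile_def mixed_def)
  finally show ?thesis .
qed

lemma rep_val_Suc_const_continuation:
  fixes A :: "'i::finite \<Rightarrow> 'a set"
  assumes fin: "\<And>i. finite (A i)" and mp: "mixed_profile A (\<lambda>j. \<nu> j g)"
    and const: "\<And>a. a \<in> PiE UNIV A \<Longrightarrow> rep_val A u R \<nu> (g @ [a]) i = c"
  shows "rep_val A u (Suc R) \<nu> g i = EU A u i (\<lambda>j. \<nu> j g) + c"
proof -
  let ?p = "prof_prob (\<lambda>j. \<nu> j g)"
  have "rep_val A u (Suc R) \<nu> g i = (\<Sum>a\<in>PiE UNIV A. ?p a * u i a + c * ?p a)"
    by (simp add: const algebra_simps cong: sum.cong)
  also have "\<dots> = EU A u i (\<lambda>j. \<nu> j g) + c * (\<Sum>a\<in>PiE UNIV A. ?p a)"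
    by (simp add: sum.distrib sum_distrib_left EU_def)
  also have "\<dots> = EU A u i (\<lambda>j. \<nu> j g) + c"
    using prof_prob_sum_eq_1[OF fin mp] by simp
  finally show ?thesis .
qed

lemma rep_val_Nash_path:
  fixes A :: "'i::finite \<Rightarrow> 'a set"
  assumes fin: "\<And>i. finite (A i)"
    and unique_value: "\<And>\<sigma>. \<sigma> \<in> Nash A u \<Longrightarrow> EU A u i \<sigma> = v"
    and on_Nash: "\<And>g'. is_history A g' \<Longrightarrow> length g' < T \<Longrightarrow> (\<lambda>j. \<nu> j (g @ g')) \<in> Nash A u"
  shows "rep_val A u T \<nu> g i = T * v"
  using on_Nash
proof (induction T arbitrary: g)
  case 0
  then show ?case by simp
next
  case (Suc T)
  have root: "(\<lambda>j. \<nu> j g) \<in> Nash A u"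
    using Suc.prems[of "[]"] by (simp add: is_history_def)
  have "rep_val A u T \<nu> (g @ [a]) i = T * v" if a: "a \<in> PiE UNIV A" for a
  proof (rule Suc.IH)
    fix g' assume "is_history A g'" "length g' < T"
    then have "is_history A ([a] @ g')" "length ([a] @ g') < Suc T"
      using a by (auto simp: is_history_def)
    from Suc.prems[OF this] show "(\<lambda>j. \<nu> j ((g @ [a]) @ g')) \<in> Nash A u" by simp
  qed
  then have "rep_val A u (Suc T) \<nu> g i = EU A u i (\<lambda>j. \<nu> j g) + T * v"
    using root by (intro rep_val_Suc_const_continuation[OF fin]) (auto simp: Nash_def)
  also have "\<dots> = Suc T * v"
    using unique_value[OF root] by (simp add: algebra_simps)
  finally show ?case .
qed

text \<open>One-shot deviation principle at the root when the continuation value c does not depend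
  on the first-round outcome; c must be the same for every profile that agrees with \<nu> from
  round two on, since a deviation at the root changes only round one.\<close>

lemma rep_Nash_root_best_response:
  fixes A :: "'i::finite \<Rightarrow> 'a set"
  assumes fin: "\<And>i. finite (A i)"
    and eq: "rep_Nash A u (Suc R) \<nu>"
    and const: "\<And>\<nu>' a. (\<And>j g. \<nu>' j ([a] @ g) = \<nu> j ([a] @ g)) \<Longrightarrow> a \<in> PiE UNIV A
                  \<Longrightarrow> rep_val A u R \<nu>' [a] i = c"
  shows "best_response A u (\<lambda>j. \<nu> j []) i"
  unfolding best_response_def
proof (intro allI impI)
  fix \<tau> assume \<tau>: "mixed (A i) \<tau>"
  have prof: "rep_profile A \<nu>" using eq by (simp add: rep_Nash_def)
  then have mp: "mixed_profile A (\<lambda>j. \<nu> j [])"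
    by (simp add: rep_profile_def rep_strategy_def mixed_profile_def)
  define s where "s = (\<lambda>g. if g = [] then \<tau> else \<nu> i g)"
  define \<nu>' where "\<nu>' = \<nu>(i := s)"
  have rs: "rep_strategy A i s"
    using \<tau> prof by (auto simp: s_def rep_strategy_def rep_profile_def)
  have root': "(\<lambda>j. \<nu>' j []) = (\<lambda>j. \<nu> j [])(i := \<tau>)"
    by (auto simp: \<nu>'_def s_def)
  have mp': "mixed_profile A (\<lambda>j. \<nu>' j [])"
    using mp \<tau> unfolding root' by (simp add: mixed_profile_def)
  have val: "rep_val A u (Suc R) \<nu> [] i = EU A u i (\<lambda>j. \<nu> j []) + c"
    using const[of \<nu>] by (intro rep_val_Suc_const_continuation[where \<nu> = \<nu> and g = "[]", OF fin mp]) simp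
  have val': "rep_val A u (Suc R) \<nu>' [] i = EU A u i (\<lambda>j. \<nu>' j []) + c"
    using const[of \<nu>'] by (intro rep_val_Suc_const_continuation[where \<nu> = \<nu>' and g = "[]", OF fin mp'])
      (simp add: \<nu>'_def s_def)
  have "rep_val A u (Suc R) \<nu>' [] i \<le> rep_val A u (Suc R) \<nu> [] i"
    using eq rs by (simp add: rep_Nash_def rep_payoff_def \<nu>'_def)
  then show "EU A u i ((\<lambda>j. \<nu> j [])(i := \<tau>)) \<le> EU A u i (\<lambda>j. \<nu> j [])"
    using val val' root' by simp
qed

lemma locally_suboptimal_last_history:
  assumes "locally_suboptimal A u T \<mu>"
  obtains h where "length h < T" "is_history A h" "(\<lambda>i. \<mu> i h) \<notin> Nash A u"
    and "\<And>g. is_history A g \<Longrightarrow> g \<noteq> [] \<Longrightarrow> length (h @ g) < T \<Longrightarrow> (\<lambda>i. \<mu> i (h @ g)) \<in> Nash A u"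
proof -
  define S where "S = {h. length h < T \<and> is_history A h \<and> (\<lambda>i. \<mu> i h) \<notin> Nash A u}"
  have fin: "finite (length ` S)"
    by (rule finite_subset[of _ "{..<T}"]) (auto simp: S_def)
  have "S \<noteq> {}" using assms by (auto simp: S_def locally_suboptimal_def)
  then have "Max (length ` S) \<in> length ` S" using fin by (intro Max_in) auto
  then obtain h where h: "h \<in> S" "length h = Max (length ` S)" by auto
  have "(\<lambda>i. \<mu> i (h @ g)) \<in> Nash A u"
    if "is_history A g" "g \<noteq> []" "length (h @ g) < T" for g
  proof (rule ccontr)
    assume "(\<lambda>i. \<mu> i (h @ g)) \<notin> Nash A u"
    with that h have "h @ g \<in> S" by (auto simp: S_def is_history_def)
    then have "length (h @ g) \<le> Max (length ` S)" using fin by (intro Max_ge) (simp_all only: image_eqI)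
    with h(2) \<open>g \<noteq> []\<close> show False by simp
  qed
  moreover from h(1) have "length h < T" "is_history A h" "(\<lambda>i. \<mu> i h) \<notin> Nash A u"
    by (simp_all add: S_def)
  ultimately show thesis using that by blast
qed

theorem mainTheorem20:
  fixes A :: "'i::finite \<Rightarrow> 'a set"
    and u :: "'i \<Rightarrow> ('i \<Rightarrow> 'a) \<Rightarrow> real"
  assumes fin: "\<And>i. finite (A i)"
    and ne: "\<And>i. A i \<noteq> {}"
    and ex: "\<exists>T \<mu>. T > 0 \<and> SPE A u T \<mu> \<and> locally_suboptimal A u T \<mu>"
  shows "\<exists>\<sigma>. mixed_profile A \<sigma> \<and> Iset A u \<subseteq> Bset A u \<sigma> \<and> Bset A u \<sigma> \<noteq> UNIV"
proof -
  obtain T \<mu> where spe: "SPE A u T \<mu>" and ls: "locally_suboptimal A u T \<mu>"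
    using ex by blast
  obtain h where hT: "length h < T" and hh: "is_history A h"
    and off: "(\<lambda>i. \<mu> i h) \<notin> Nash A u"
    and later: "\<And>g. is_history A g \<Longrightarrow> g \<noteq> [] \<Longrightarrow> length (h @ g) < T \<Longrightarrow> (\<lambda>i. \<mu> i (h @ g)) \<in> Nash A u"
    using locally_suboptimal_last_history[OF ls] by blast
  obtain R where R: "T - length h = Suc R" using hT by (metis Suc_diff_Suc)
  define \<nu> where "\<nu> = continuation \<mu> h"
  have eq: "rep_Nash A u (Suc R) \<nu>"
    using spe hT hh R by (auto simp: SPE_def \<nu>_def)
  have root: "(\<lambda>j. \<nu> j []) = (\<lambda>i. \<mu> i h)" by (simp add: \<nu>_def continuation_def)
  have mp: "mixed_profile A (\<lambda>i. \<mu> i h)"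
    using eq unfolding root[symmetric]
    by (simp add: rep_Nash_def rep_profile_def rep_strategy_def mixed_profile_def)
  have "i \<in> Bset A u (\<lambda>i. \<mu> i h)" if "i \<in> Iset A u" for i
  proof -
    obtain v where "Vset A u i = {v}"
      using \<open>i \<in> Iset A u\<close> by (auto simp: Iset_def card_Suc_eq)
    then have v: "\<And>\<sigma>. \<sigma> \<in> Nash A u \<Longrightarrow> EU A u i \<sigma> = v" by (auto simp: Vset_def)
    have "rep_val A u R \<nu>' [a] i = R * v"
      if agree: "\<And>j g. \<nu>' j ([a] @ g) = \<nu> j ([a] @ g)" and a: "a \<in> PiE UNIV A" for \<nu>' a
      using later[of "[a] @ _"] a R
      by (intro rep_val_Nash_path[OF fin v])
        (auto simp: agree[simplified] \<nu>_def continuation_def is_history_def)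
    from rep_Nash_root_best_response[OF fin eq this] show ?thesis
      by (simp add: root Bset_def)
  qed
  moreover have "Bset A u (\<lambda>i. \<mu> i h) \<noteq> UNIV"
    using off mp by (auto simp: Bset_def Nash_def)
  ultimately show ?thesis using mp by blast
qed

end
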